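(* Let $d$ be the shortest-path distance on a finite state space $\mathcal{S}$ (with $d(s,s)=0$), $V^*=-d$, and let $\epsilon_V,\epsilon_\psi,\epsilon_\pi\ge 0$. Assume: (1) $V_\omega:\mathcal{S}\times\mathcal{S}\to\mathbb{R}$ satisfies $|V_\omega(s,g)-V^*(s,g)|\le\epsilon_V$ for all $s,g$; (2) the anticipation model $\phi:\mathcal{S}\times\mathcal{S}\to\mathcal{S}$ satisfies $\max(0,V_\omega(s,g)-V_\omega(s,\hat s)-V_\omega(\hat s,g))\le\epsilon_\psi$ for all $s,g$, where $\hat s=\phi(s,g)$; (3) the low-level policy, when tasked with reaching $\hat s$ from $s$, reaches $\hat s$ and incurs cost (number of steps) $C_\theta(s,\hat s)\le d(s,\hat s)+\epsilon_\pi$. Let $s_0,s_g\in\mathcal{S}$ and let $s_0,s_1,\dots,s_M$ be the states with $s_{k+1}=\phi(s_k,s_g)$ for $0\le k<M$ and $s_M=s_g$. Then the total cost $C_{RLA}(s_0,s_g)=\sum_{k=0}^{M-1}C_\theta(s_k,s_{k+1})$ satisfies $$C_{RLA}(s_0,s_g)\le d(s_0,s_g)+M\,(\epsilon_\pi+3\epsilon_V+\epsilon_\psi).$$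
   Context: Setting: a goal-conditioned MDP with finite state space, reward $-1$ per step and $0$ upon reaching the goal; $d(s,g)$ is the minimum number of steps from $s$ to $g$ and the optimal value function is $V^*(s,g)=-d(s,g)$. $V_\omega$ is a learned value function, $\phi$ an anticipation model proposing subgoals, and $C_\theta(s,\hat s)$ the cost incurred by the low-level goal-conditioned policy travelling from $s$ to subgoal $\hat s$. *)

theory Defs
  imports Complex_Main
begin

text \<open>The MDP's one-step transition structure is given as a relation
  step s s' (s' reachable from s in one step under some action).\<close>

definition dist_sp :: "('a \<Rightarrow> 'a \<Rightarrow> bool) \<Rightarrow> 'a \<Rightarrow> 'a \<Rightarrow> nat" where
  "dist_sp step s g = (LEAST n. (step ^^ n) s g)"

definition Vstar :: "('a \<Rightarrow> 'a \<Rightarrow> bool) \<Rightarrow> 'a \<Rightarrow> 'a \<Rightarrow> real" where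
  "Vstar step s g = - real (dist_sp step s g)"

end

theory Submission
  imports Defs
begin

(* Replacing each of the three values in the anticipation inequality by -d costs eps_V, so
   the leg from s to phi(s,g) costs at most d(s,g) - d(phi(s,g),g) + eps_pi + 3 eps_V + eps_psi.
   Summed along the trajectory these bounds telescope, and the remaining term -d(s_M,g) is
   nonpositive. *)

lemma subgoal_cost_le_dist_decrease:
  fixes V d :: "'a \<Rightarrow> 'a \<Rightarrow> real"
  assumes value_err: "\<And>s g. \<bar>V s g + d s g\<bar> \<le> \<epsilon>V"
    and anticip_err: "V s g - V s s' - V s' g \<le> \<epsilon>\<psi>"
    and policy_err: "c \<le> d s s' + \<epsilon>\<pi>"
  shows "c \<le> d s g - d s' g + (\<epsilon>\<pi> + 3 * \<epsilon>V + \<epsilon>\<psi>)"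
  using anticip_err policy_err value_err[of s g] value_err[of s s'] value_err[of s' g]
  by (simp add: abs_le_iff)

lemma sum_le_telescope:
  fixes c f :: "nat \<Rightarrow> 'a::linordered_idom"
  assumes "\<And>k. k < M \<Longrightarrow> c k \<le> f k - f (Suc k) + E"
  shows "(\<Sum>k<M. c k) \<le> f 0 - f M + of_nat M * E"
proof -
  have "(\<Sum>k<M. c k) \<le> (\<Sum>k<M. f k - f (Suc k) + E)"
    using assms by (intro sum_mono) simp
  also have "\<dots> = f 0 - f M + of_nat M * E"
    by (simp add: sum.distrib sum_lessThan_telescope')
  finally show ?thesis .
qed

theorem theorem2:
  fixes step :: "'s::finite \<Rightarrow> 's \<Rightarrow> bool"
    and V\<omega> :: "'s \<Rightarrow> 's \<Rightarrow> real"
    and \<phi> :: "'s \<Rightarrow> 's \<Rightarrow> 's"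
    and C\<theta> :: "'s \<Rightarrow> 's \<Rightarrow> nat"
    and \<epsilon>V \<epsilon>\<psi> \<epsilon>\<pi> :: real
    and s0 sg :: 's
    and traj :: "nat \<Rightarrow> 's"
    and M :: nat
  assumes reachable: "\<And>s g. \<exists>n. (step ^^ n) s g"
    and eV: "\<epsilon>V \<ge> 0" and epsi: "\<epsilon>\<psi> \<ge> 0" and epi: "\<epsilon>\<pi> \<ge> 0"
    and value_err: "\<And>s g. \<bar>V\<omega> s g - Vstar step s g\<bar> \<le> \<epsilon>V"
    and anticip_err: "\<And>s g. max 0 (V\<omega> s g - V\<omega> s (\<phi> s g) - V\<omega> (\<phi> s g) g) \<le> \<epsilon>\<psi>"
    and policy_err: "\<And>s g. real (C\<theta> s (\<phi> s g)) \<le> real (dist_sp step s (\<phi> s g)) + \<epsilon>\<pi>"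
    and traj0: "traj 0 = s0"
    and traj_step: "\<And>k. k < M \<Longrightarrow> traj (Suc k) = \<phi> (traj k) sg"
    and trajM: "traj M = sg"
  shows "real (\<Sum>k<M. C\<theta> (traj k) (traj (Suc k)))
           \<le> real (dist_sp step s0 sg) + real M * (\<epsilon>\<pi> + 3 * \<epsilon>V + \<epsilon>\<psi>)"
proof -
  let ?d = "\<lambda>s g. real (dist_sp step s g)"
  have leg_cost: "real (C\<theta> s (\<phi> s g)) \<le> ?d s g - ?d (\<phi> s g) g + (\<epsilon>\<pi> + 3 * \<epsilon>V + \<epsilon>\<psi>)"
    for s g
  proof (rule subgoal_cost_le_dist_decrease[where V = V\<omega> and d = ?d])
    show "\<bar>V\<omega> s g + ?d s g\<bar> \<le> \<epsilon>V" for s g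
      using value_err[of s g] by (simp add: Vstar_def)
  qed (use anticip_err[of s g] policy_err[of s g] in simp_all)
  have "real (\<Sum>k<M. C\<theta> (traj k) (traj (Suc k)))
          \<le> ?d (traj 0) sg - ?d (traj M) sg + real M * (\<epsilon>\<pi> + 3 * \<epsilon>V + \<epsilon>\<psi>)"
    unfolding of_nat_sum
    using sum_le_telescope[of M "\<lambda>k. real (C\<theta> (traj k) (traj (Suc k)))" "\<lambda>k. ?d (traj k) sg"]
    by (simp add: leg_cost traj_step)
  then show ?thesis
    using traj0 by simp
qed

end
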